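(* Let $\mathcal{C}$ be an abelian category and $\mathcal{A}$ the abelian category whose objects are complexes $[A\xrightarrow{f}B\xrightarrow{g}C]$ in $\mathcal{C}$ (degrees $-2,-1,0$) with $f$ injective and $\operatorname{Ker} g=\operatorname{Im} f$, morphisms being chain maps modulo homotopy. If $[D\to I\to J]$ is an object of $\mathcal{A}$ with $I$ and $J$ injective objects of $\mathcal{C}$, then $[D\to I\to J]$ is an injective object of $\mathcal{A}$.
   Context: $\mathcal{A}$ is the heart of the $t$-structure on $K^b(\mathcal{C})$ with $D^{\leq 0}=\{X: X^i=0,\ i>0\}$ and $D^{\geq 0}=\{X: X^i=0,\ i<-2,\ H^{-2}(X)=H^{-1}(X)=0\}$. *)

theory Defs
  imports Main
begin

text \<open>A (small-or-large) preadditive category presented by its data: a set of objects,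
  a set of arrows, domain/codomain, composition (Cmp g f = g o f), identities and the
  abelian-group structure on each hom-set.\<close>

record ('o, 'm) addcat =
  Ob   :: "'o set"
  Ar   :: "'m set"
  Dom  :: "'m \<Rightarrow> 'o"
  Cod  :: "'m \<Rightarrow> 'o"
  Cmp  :: "'m \<Rightarrow> 'm \<Rightarrow> 'm"
  Idm  :: "'o \<Rightarrow> 'm"
  Add  :: "'m \<Rightarrow> 'm \<Rightarrow> 'm"
  Neg  :: "'m \<Rightarrow> 'm"
  Zer  :: "'o \<Rightarrow> 'o \<Rightarrow> 'm"

definition hom :: "('o,'m) addcat \<Rightarrow> 'o \<Rightarrow> 'o \<Rightarrow> 'm set" where
  "hom C X Y = {f \<in> Ar C. Dom C f = X \<and> Cod C f = Y}"

definition is_category :: "('o,'m) addcat \<Rightarrow> bool" where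
  "is_category C \<longleftrightarrow>
     (\<forall>f \<in> Ar C. Dom C f \<in> Ob C \<and> Cod C f \<in> Ob C) \<and>
     (\<forall>X \<in> Ob C. Idm C X \<in> hom C X X) \<and>
     (\<forall>X Y Z f g. f \<in> hom C X Y \<longrightarrow> g \<in> hom C Y Z \<longrightarrow> Cmp C g f \<in> hom C X Z) \<and>
     (\<forall>W X Y Z f g h. f \<in> hom C W X \<longrightarrow> g \<in> hom C X Y \<longrightarrow> h \<in> hom C Y Z \<longrightarrow>
         Cmp C h (Cmp C g f) = Cmp C (Cmp C h g) f) \<and>
     (\<forall>X Y f. f \<in> hom C X Y \<longrightarrow> Cmp C (Idm C Y) f = f \<and> Cmp C f (Idm C X) = f)"

definition is_preadditive :: "('o,'m) addcat \<Rightarrow> bool" where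
  "is_preadditive C \<longleftrightarrow> is_category C \<and>
     (\<forall>X \<in> Ob C. \<forall>Y \<in> Ob C.
        Zer C X Y \<in> hom C X Y \<and>
        (\<forall>f \<in> hom C X Y. \<forall>g \<in> hom C X Y. Add C f g \<in> hom C X Y) \<and>
        (\<forall>f \<in> hom C X Y. Neg C f \<in> hom C X Y) \<and>
        (\<forall>f \<in> hom C X Y. \<forall>g \<in> hom C X Y. \<forall>h \<in> hom C X Y.
            Add C (Add C f g) h = Add C f (Add C g h)) \<and>
        (\<forall>f \<in> hom C X Y. \<forall>g \<in> hom C X Y. Add C f g = Add C g f) \<and>
        (\<forall>f \<in> hom C X Y. Add C f (Zer C X Y) = f) \<and>
        (\<forall>f \<in> hom C X Y. Add C f (Neg C f) = Zer C X Y)) \<and>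
     (\<forall>X Y Z f g h. f \<in> hom C X Y \<longrightarrow> g \<in> hom C X Y \<longrightarrow> h \<in> hom C Y Z \<longrightarrow>
         Cmp C h (Add C f g) = Add C (Cmp C h f) (Cmp C h g)) \<and>
     (\<forall>X Y Z f g h. h \<in> hom C X Y \<longrightarrow> f \<in> hom C Y Z \<longrightarrow> g \<in> hom C Y Z \<longrightarrow>
         Cmp C (Add C f g) h = Add C (Cmp C f h) (Cmp C g h))"

definition is_mono :: "('o,'m) addcat \<Rightarrow> 'm \<Rightarrow> bool" where
  "is_mono C f \<longleftrightarrow> f \<in> Ar C \<and>
     (\<forall>W \<in> Ob C. \<forall>u \<in> hom C W (Dom C f). \<forall>v \<in> hom C W (Dom C f).
        Cmp C f u = Cmp C f v \<longrightarrow> u = v)"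

definition is_epi :: "('o,'m) addcat \<Rightarrow> 'm \<Rightarrow> bool" where
  "is_epi C f \<longleftrightarrow> f \<in> Ar C \<and>
     (\<forall>W \<in> Ob C. \<forall>u \<in> hom C (Cod C f) W. \<forall>v \<in> hom C (Cod C f) W.
        Cmp C u f = Cmp C v f \<longrightarrow> u = v)"

definition is_kernel :: "('o,'m) addcat \<Rightarrow> 'm \<Rightarrow> 'm \<Rightarrow> bool" where
  "is_kernel C g k \<longleftrightarrow> g \<in> Ar C \<and> k \<in> hom C (Dom C k) (Dom C g) \<and>
     Cmp C g k = Zer C (Dom C k) (Cod C g) \<and>
     (\<forall>W \<in> Ob C. \<forall>h \<in> hom C W (Dom C g). Cmp C g h = Zer C W (Cod C g) \<longrightarrow>
        (\<exists>!u. u \<in> hom C W (Dom C k) \<and> Cmp C k u = h))"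

definition is_cokernel :: "('o,'m) addcat \<Rightarrow> 'm \<Rightarrow> 'm \<Rightarrow> bool" where
  "is_cokernel C g c \<longleftrightarrow> g \<in> Ar C \<and> c \<in> hom C (Cod C g) (Cod C c) \<and>
     Cmp C c g = Zer C (Dom C g) (Cod C c) \<and>
     (\<forall>W \<in> Ob C. \<forall>h \<in> hom C (Cod C g) W. Cmp C h g = Zer C (Dom C g) W \<longrightarrow>
        (\<exists>!u. u \<in> hom C (Cod C c) W \<and> Cmp C u c = h))"

definition is_abelian :: "('o,'m) addcat \<Rightarrow> bool" where
  "is_abelian C \<longleftrightarrow> is_preadditive C \<and>
     \<comment> \<open>zero object\<close>
     (\<exists>Z \<in> Ob C. \<forall>X \<in> Ob C. hom C Z X = {Zer C Z X} \<and> hom C X Z = {Zer C X Z}) \<and>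
     \<comment> \<open>binary biproducts\<close>
     (\<forall>X \<in> Ob C. \<forall>Y \<in> Ob C. \<exists>P \<in> Ob C. \<exists>i1 i2 p1 p2.
        i1 \<in> hom C X P \<and> i2 \<in> hom C Y P \<and> p1 \<in> hom C P X \<and> p2 \<in> hom C P Y \<and>
        Cmp C p1 i1 = Idm C X \<and> Cmp C p2 i2 = Idm C Y \<and>
        Cmp C p1 i2 = Zer C Y X \<and> Cmp C p2 i1 = Zer C X Y \<and>
        Add C (Cmp C i1 p1) (Cmp C i2 p2) = Idm C P) \<and>
     \<comment> \<open>kernels and cokernels exist\<close>
     (\<forall>g \<in> Ar C. \<exists>k. is_kernel C g k) \<and>
     (\<forall>g \<in> Ar C. \<exists>c. is_cokernel C g c) \<and>
     \<comment> \<open>every mono is a kernel, every epi is a cokernel\<close>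
     (\<forall>m. is_mono C m \<longrightarrow> (\<exists>g \<in> Ar C. is_kernel C g m)) \<and>
     (\<forall>e. is_epi C e \<longrightarrow> (\<exists>g \<in> Ar C. is_cokernel C g e))"

definition injective_obj :: "('o,'m) addcat \<Rightarrow> 'o \<Rightarrow> bool" where
  "injective_obj C I \<longleftrightarrow> I \<in> Ob C \<and>
     (\<forall>X \<in> Ob C. \<forall>Y \<in> Ob C. \<forall>m \<in> hom C X Y. \<forall>a \<in> hom C X I.
        is_mono C m \<longrightarrow> (\<exists>b \<in> hom C Y I. Cmp C b m = a))"

text \<open>An object of A: (A, B, C, f, g) with f : A \<rightarrow> B, g : B \<rightarrow> C, g f = 0, f mono and
  Ker g = Im f; since f is mono, Im f is f itself, so Ker g = Im f means f is a kernel of g.\<close>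
type_synonym ('o,'m) cx = "'o \<times> 'o \<times> 'o \<times> 'm \<times> 'm"

definition cxA :: "('o,'m) addcat \<Rightarrow> ('o,'m) cx \<Rightarrow> bool" where
  "cxA C X \<longleftrightarrow> (case X of (A, B, Cc, f, g) \<Rightarrow>
     A \<in> Ob C \<and> B \<in> Ob C \<and> Cc \<in> Ob C \<and> f \<in> hom C A B \<and> g \<in> hom C B Cc \<and>
     Cmp C g f = Zer C A Cc \<and> is_mono C f \<and> is_kernel C g f)"

definition chain_map :: "('o,'m) addcat \<Rightarrow> ('o,'m) cx \<Rightarrow> ('o,'m) cx \<Rightarrow> 'm \<times> 'm \<times> 'm \<Rightarrow> bool" where
  "chain_map C X X' \<phi> \<longleftrightarrow> (case X of (A, B, Cc, f, g) \<Rightarrow> case X' of (A', B', Cc', f', g') \<Rightarrow>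
     case \<phi> of (a, b, c) \<Rightarrow>
     a \<in> hom C A A' \<and> b \<in> hom C B B' \<and> c \<in> hom C Cc Cc' \<and>
     Cmp C b f = Cmp C f' a \<and> Cmp C c g = Cmp C g' b)"

text \<open>Chain homotopy: homotopy maps s : B \<rightarrow> A', t : C \<rightarrow> B' (the other components
  involve zero objects) with \<phi> - \<psi> = d s + s d in each degree.\<close>
definition homotopic :: "('o,'m) addcat \<Rightarrow> ('o,'m) cx \<Rightarrow> ('o,'m) cx \<Rightarrow>
    'm \<times> 'm \<times> 'm \<Rightarrow> 'm \<times> 'm \<times> 'm \<Rightarrow> bool" where
  "homotopic C X X' \<phi> \<psi> \<longleftrightarrow> chain_map C X X' \<phi> \<and> chain_map C X X' \<psi> \<and>
    (case X of (A, B, Cc, f, g) \<Rightarrow> case X' of (A', B', Cc', f', g') \<Rightarrow>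
     case \<phi> of (a, b, c) \<Rightarrow> case \<psi> of (a', b', c') \<Rightarrow>
     (\<exists>s t. s \<in> hom C B A' \<and> t \<in> hom C Cc B' \<and>
        Add C a (Neg C a') = Cmp C s f \<and>
        Add C b (Neg C b') = Add C (Cmp C f' s) (Cmp C t g) \<and>
        Add C c (Neg C c') = Cmp C g' t))"

definition cmp3 :: "('o,'m) addcat \<Rightarrow> 'm \<times> 'm \<times> 'm \<Rightarrow> 'm \<times> 'm \<times> 'm \<Rightarrow> 'm \<times> 'm \<times> 'm" where
  "cmp3 C \<psi> \<phi> = (case \<psi> of (a', b', c') \<Rightarrow> case \<phi> of (a, b, c) \<Rightarrow>
     (Cmp C a' a, Cmp C b' b, Cmp C c' c))"

text \<open>A morphism of A (homotopy class represented by chain map u : X \<rightarrow> Y) is a monomorphism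
  in A.\<close>
definition mono_A :: "('o,'m) addcat \<Rightarrow> ('o,'m) cx \<Rightarrow> ('o,'m) cx \<Rightarrow> 'm \<times> 'm \<times> 'm \<Rightarrow> bool" where
  "mono_A C X Y u \<longleftrightarrow> chain_map C X Y u \<and>
     (\<forall>Z v w. cxA C Z \<longrightarrow> chain_map C Z X v \<longrightarrow> chain_map C Z X w \<longrightarrow>
        homotopic C Z Y (cmp3 C u v) (cmp3 C u w) \<longrightarrow> homotopic C Z X v w)"

definition injective_A :: "('o,'m) addcat \<Rightarrow> ('o,'m) cx \<Rightarrow> bool" where
  "injective_A C E \<longleftrightarrow> cxA C E \<and>
     (\<forall>X Y u \<phi>. cxA C X \<longrightarrow> cxA C Y \<longrightarrow> mono_A C X Y u \<longrightarrow> chain_map C X E \<phi> \<longrightarrow>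
        (\<exists>\<psi>. chain_map C Y E \<psi> \<and> homotopic C X E (cmp3 C \<psi> u) \<phi>))"

end

theory Submission
  imports Defs
begin

text \<open>Testing u against the
  complexes [0 \<rightarrow> 0 \<rightarrow> W] shows that c reflects boundaries: whenever c x lies in the image of
  g2, x lies in the image of g1. Consequently -\<phi>1 is well defined on the pullback of c and g2,
  which is a subobject of Cc \<oplus> B', so injectivity of I extends it to Cc \<oplus> B'; the resulting
  map, corrected by \<phi>2, then descends along (c, g2) : Cc \<oplus> B' \<rightarrow> C' by injectivity of J.
  This produces the degree -1 and degree 0 components of the extension together with the
  homotopy in degree 0; the remaining data are obtained by lifting through d = Ker e.\<close>

definition zero_obj :: "('o,'m) addcat \<Rightarrow> 'o \<Rightarrow> bool" where
  "zero_obj C Z \<longleftrightarrow> Z \<in> Ob C \<and> (\<forall>X \<in> Ob C. hom C Z X = {Zer C Z X} \<and> hom C X Z = {Zer C X Z})"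

definition is_biproduct :: "('o,'m) addcat \<Rightarrow> 'o \<Rightarrow> 'o \<Rightarrow> 'o \<Rightarrow> 'm \<Rightarrow> 'm \<Rightarrow> 'm \<Rightarrow> 'm \<Rightarrow> bool"
  where "is_biproduct C X Y P i1 i2 p1 p2 \<longleftrightarrow> P \<in> Ob C \<and>
    i1 \<in> hom C X P \<and> i2 \<in> hom C Y P \<and> p1 \<in> hom C P X \<and> p2 \<in> hom C P Y \<and>
    Cmp C p1 i1 = Idm C X \<and> Cmp C p2 i2 = Idm C Y \<and>
    Cmp C p1 i2 = Zer C Y X \<and> Cmp C p2 i1 = Zer C X Y \<and>
    Add C (Cmp C i1 p1) (Cmp C i2 p2) = Idm C P"

locale preadditive_cat =
  fixes C :: "('o,'m) addcat"
  assumes preadditive: "is_preadditive C"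
begin

lemma category: "is_category C"
  using preadditive unfolding is_preadditive_def by blast

lemma homD: "f \<in> hom C X Y \<Longrightarrow> f \<in> Ar C \<and> Dom C f = X \<and> Cod C f = Y"
  by (simp add: hom_def)

lemma hom_obs: "f \<in> hom C X Y \<Longrightarrow> X \<in> Ob C \<and> Y \<in> Ob C"
  using category unfolding is_category_def hom_def by blast

lemma comp_in_hom [intro]: "f \<in> hom C X Y \<Longrightarrow> g \<in> hom C Y Z \<Longrightarrow> Cmp C g f \<in> hom C X Z"
  using category unfolding is_category_def by blast

lemma comp_assoc: "f \<in> hom C W X \<Longrightarrow> g \<in> hom C X Y \<Longrightarrow> h \<in> hom C Y Z \<Longrightarrow>
    Cmp C h (Cmp C g f) = Cmp C (Cmp C h g) f"
  using category unfolding is_category_def by blast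

lemma id_in_hom [intro]: "X \<in> Ob C \<Longrightarrow> Idm C X \<in> hom C X X"
  using category unfolding is_category_def by blast

lemma comp_id_right: "f \<in> hom C X Y \<Longrightarrow> Cmp C f (Idm C X) = f"
  using category unfolding is_category_def by blast

lemma hom_group:
  assumes "X \<in> Ob C" "Y \<in> Ob C"
  shows "Zer C X Y \<in> hom C X Y \<and>
    (\<forall>f \<in> hom C X Y. \<forall>g \<in> hom C X Y. Add C f g \<in> hom C X Y) \<and>
    (\<forall>f \<in> hom C X Y. Neg C f \<in> hom C X Y) \<and>
    (\<forall>f \<in> hom C X Y. \<forall>g \<in> hom C X Y. \<forall>h \<in> hom C X Y.
        Add C (Add C f g) h = Add C f (Add C g h)) \<and>
    (\<forall>f \<in> hom C X Y. \<forall>g \<in> hom C X Y. Add C f g = Add C g f) \<and>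
    (\<forall>f \<in> hom C X Y. Add C f (Zer C X Y) = f) \<and>
    (\<forall>f \<in> hom C X Y. Add C f (Neg C f) = Zer C X Y)"
proof -
  have "\<forall>X \<in> Ob C. \<forall>Y \<in> Ob C.
    Zer C X Y \<in> hom C X Y \<and>
    (\<forall>f \<in> hom C X Y. \<forall>g \<in> hom C X Y. Add C f g \<in> hom C X Y) \<and>
    (\<forall>f \<in> hom C X Y. Neg C f \<in> hom C X Y) \<and>
    (\<forall>f \<in> hom C X Y. \<forall>g \<in> hom C X Y. \<forall>h \<in> hom C X Y.
        Add C (Add C f g) h = Add C f (Add C g h)) \<and>
    (\<forall>f \<in> hom C X Y. \<forall>g \<in> hom C X Y. Add C f g = Add C g f) \<and>
    (\<forall>f \<in> hom C X Y. Add C f (Zer C X Y) = f) \<and>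
    (\<forall>f \<in> hom C X Y. Add C f (Neg C f) = Zer C X Y)"
    using preadditive unfolding is_preadditive_def by (elim conjE)
  thus ?thesis using assms by blast
qed

lemma zero_in_hom [intro]: "X \<in> Ob C \<Longrightarrow> Y \<in> Ob C \<Longrightarrow> Zer C X Y \<in> hom C X Y"
  using hom_group by blast

lemma add_in_hom [intro]: "f \<in> hom C X Y \<Longrightarrow> g \<in> hom C X Y \<Longrightarrow> Add C f g \<in> hom C X Y"
  using hom_group[of X Y] hom_obs[of f X Y] by blast

lemma neg_in_hom [intro]: "f \<in> hom C X Y \<Longrightarrow> Neg C f \<in> hom C X Y"
  using hom_group[of X Y] hom_obs[of f X Y] by blast

lemma add_assoc: "f \<in> hom C X Y \<Longrightarrow> g \<in> hom C X Y \<Longrightarrow> h \<in> hom C X Y \<Longrightarrow>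
    Add C (Add C f g) h = Add C f (Add C g h)"
  using hom_group[of X Y] hom_obs[of f X Y] by blast

lemma add_comm: "f \<in> hom C X Y \<Longrightarrow> g \<in> hom C X Y \<Longrightarrow> Add C f g = Add C g f"
  using hom_group[of X Y] hom_obs[of f X Y] by blast

lemma add_zero_right: "f \<in> hom C X Y \<Longrightarrow> Add C f (Zer C X Y) = f"
  using hom_group[of X Y] hom_obs[of f X Y] by blast

lemma add_neg_right: "f \<in> hom C X Y \<Longrightarrow> Add C f (Neg C f) = Zer C X Y"
  using hom_group[of X Y] hom_obs[of f X Y] by blast

lemma comp_distrib:
  "(\<forall>X Y Z f g h. f \<in> hom C X Y \<longrightarrow> g \<in> hom C X Y \<longrightarrow> h \<in> hom C Y Z \<longrightarrow>
      Cmp C h (Add C f g) = Add C (Cmp C h f) (Cmp C h g)) \<and>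
   (\<forall>X Y Z f g h. h \<in> hom C X Y \<longrightarrow> f \<in> hom C Y Z \<longrightarrow> g \<in> hom C Y Z \<longrightarrow>
      Cmp C (Add C f g) h = Add C (Cmp C f h) (Cmp C g h))"
  using preadditive unfolding is_preadditive_def by (elim conjE) (intro conjI)

lemma comp_distrib_left: "f \<in> hom C X Y \<Longrightarrow> g \<in> hom C X Y \<Longrightarrow> h \<in> hom C Y Z \<Longrightarrow>
    Cmp C h (Add C f g) = Add C (Cmp C h f) (Cmp C h g)"
  using conjunct1[OF comp_distrib] by (elim allE impE)

lemma comp_distrib_right: "h \<in> hom C X Y \<Longrightarrow> f \<in> hom C Y Z \<Longrightarrow> g \<in> hom C Y Z \<Longrightarrow>
    Cmp C (Add C f g) h = Add C (Cmp C f h) (Cmp C g h)"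
  using conjunct2[OF comp_distrib] by (elim allE impE)

lemma add_zero_left: "f \<in> hom C X Y \<Longrightarrow> Add C (Zer C X Y) f = f"
  using add_comm[OF _ zero_in_hom, of f X Y] add_zero_right[of f X Y] hom_obs[of f X Y] by simp

lemma add_neg_left: "f \<in> hom C X Y \<Longrightarrow> Add C (Neg C f) f = Zer C X Y"
  using add_comm[OF _ neg_in_hom, of f X Y f] add_neg_right[of f X Y] by simp

lemma add_left_cancel:
  assumes a: "a \<in> hom C X Y" and b: "b \<in> hom C X Y" and c: "c \<in> hom C X Y"
    and eq: "Add C a b = Add C a c"
  shows "b = c"
proof -
  have "b = Add C (Add C (Neg C a) a) b" using add_neg_left[OF a] add_zero_left[OF b] by simp
  also have "\<dots> = Add C (Neg C a) (Add C a c)" using add_assoc[OF neg_in_hom[OF a] a b] eq by simp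
  also have "\<dots> = c" using add_assoc[OF neg_in_hom[OF a] a c] add_neg_left[OF a] add_zero_left[OF c] by simp
  finally show ?thesis .
qed

lemma neg_unique:
  assumes "a \<in> hom C X Y" "b \<in> hom C X Y" "Add C a b = Zer C X Y"
  shows "b = Neg C a"
  using add_left_cancel[OF assms(1,2) neg_in_hom[OF assms(1)]] assms(3) add_neg_right[OF assms(1)]
  by simp

lemma neg_zero: "X \<in> Ob C \<Longrightarrow> Y \<in> Ob C \<Longrightarrow> Neg C (Zer C X Y) = Zer C X Y"
  using neg_unique[OF zero_in_hom zero_in_hom add_zero_right[OF zero_in_hom]] by simp

lemma idempotent_add_zero:
  assumes "a \<in> hom C X Y" "Add C a a = a"
  shows "a = Zer C X Y"
  using add_left_cancel[OF assms(1,1) zero_in_hom] assms(2) add_zero_right[OF assms(1)]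
    hom_obs[OF assms(1)] by simp

lemma comp_zero_right:
  assumes f: "f \<in> hom C Y Z" and X: "X \<in> Ob C"
  shows "Cmp C f (Zer C X Y) = Zer C X Z"
proof -
  have z: "Zer C X Y \<in> hom C X Y" using X hom_obs[OF f] by blast
  have "Cmp C f (Zer C X Y) = Add C (Cmp C f (Zer C X Y)) (Cmp C f (Zer C X Y))"
    using comp_distrib_left[OF z z f] add_zero_right[OF z] by simp
  thus ?thesis using idempotent_add_zero[OF comp_in_hom[OF z f]] by simp
qed

lemma comp_zero_left:
  assumes f: "f \<in> hom C X Y" and Z: "Z \<in> Ob C"
  shows "Cmp C (Zer C Y Z) f = Zer C X Z"
proof -
  have z: "Zer C Y Z \<in> hom C Y Z" using Z hom_obs[OF f] by blast
  have "Cmp C (Zer C Y Z) f = Add C (Cmp C (Zer C Y Z) f) (Cmp C (Zer C Y Z) f)"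
    using comp_distrib_right[OF f z z] add_zero_right[OF z] by simp
  thus ?thesis using idempotent_add_zero[OF comp_in_hom[OF f z]] by simp
qed

lemma comp_neg_right:
  assumes f: "f \<in> hom C X Y" and h: "h \<in> hom C Y Z"
  shows "Cmp C h (Neg C f) = Neg C (Cmp C h f)"
proof (rule neg_unique)
  show "Add C (Cmp C h f) (Cmp C h (Neg C f)) = Zer C X Z"
    using comp_distrib_left[OF f neg_in_hom[OF f] h] add_neg_right[OF f]
      comp_zero_right[OF h] hom_obs[OF f] by simp
qed (use f h in \<open>blast intro: comp_in_hom neg_in_hom\<close>)+

lemma comp_neg_left:
  assumes h: "h \<in> hom C X Y" and f: "f \<in> hom C Y Z"
  shows "Cmp C (Neg C f) h = Neg C (Cmp C f h)"
proof (rule neg_unique)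
  show "Add C (Cmp C f h) (Cmp C (Neg C f) h) = Zer C X Z"
    using comp_distrib_right[OF h f neg_in_hom[OF f]] add_neg_right[OF f]
      comp_zero_left[OF h] hom_obs[OF f] by simp
qed (use f h in \<open>blast intro: comp_in_hom neg_in_hom\<close>)+

lemma diff_eq_iff_eq_add:
  assumes a: "a \<in> hom C X Y" and b: "b \<in> hom C X Y" and c: "c \<in> hom C X Y"
  shows "Add C a (Neg C b) = c \<longleftrightarrow> a = Add C c b"
proof
  assume "Add C a (Neg C b) = c"
  thus "a = Add C c b"
    using add_assoc[OF a neg_in_hom[OF b] b] add_neg_left[OF b] add_zero_right[OF a] by simp
next
  assume "a = Add C c b"
  thus "Add C a (Neg C b) = c"
    using add_assoc[OF c b neg_in_hom[OF b]] add_neg_right[OF b] add_zero_right[OF c] by simp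
qed

lemma diff_eq_zero_iff_eq:
  assumes a: "a \<in> hom C X Y" and b: "b \<in> hom C X Y"
  shows "Add C a (Neg C b) = Zer C X Y \<longleftrightarrow> a = b"
  using diff_eq_iff_eq_add[OF a b zero_in_hom] add_zero_left[OF b] hom_obs[OF a] by simp

lemma add_diff_diff_cancel:
  assumes p: "p \<in> hom C X Y" and q: "q \<in> hom C X Y"
  shows "Add C (Add C (Add C p q) (Neg C p)) (Neg C q) = Zer C X Y"
proof -
  have "Add C (Add C p q) (Neg C p) = q"
    using diff_eq_iff_eq_add[OF add_in_hom[OF p q] p q] add_comm[OF p q] by simp
  thus ?thesis using add_neg_right[OF q] by simp
qed

lemma zero_obj_hom_from_unique:
  assumes "zero_obj C Z" "p \<in> hom C Z X" "q \<in> hom C Z X"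
  shows "p = q"
  using assms hom_obs[OF assms(2)] unfolding zero_obj_def by auto

lemma biproduct_proj1_inj:
  assumes bp: "is_biproduct C X Y P i1 i2 p1 p2" and u: "u \<in> hom C X Z"
  shows "Cmp C (Cmp C u p1) i1 = u" "Cmp C (Cmp C u p1) i2 = Zer C Y Z"
proof -
  have i: "i1 \<in> hom C X P" "i2 \<in> hom C Y P" and p1: "p1 \<in> hom C P X"
    and "Cmp C p1 i1 = Idm C X" "Cmp C p1 i2 = Zer C Y X"
    using bp unfolding is_biproduct_def by auto
  thus "Cmp C (Cmp C u p1) i1 = u" "Cmp C (Cmp C u p1) i2 = Zer C Y Z"
    using comp_assoc[OF i(1) p1 u] comp_assoc[OF i(2) p1 u] comp_id_right[OF u]
      comp_zero_right[OF u hom_obs[OF i(2), THEN conjunct1]] by simp_all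
qed

lemma biproduct_proj2_inj:
  assumes bp: "is_biproduct C X Y P i1 i2 p1 p2" and v: "v \<in> hom C Y Z"
  shows "Cmp C (Cmp C v p2) i2 = v" "Cmp C (Cmp C v p2) i1 = Zer C X Z"
proof -
  have i: "i1 \<in> hom C X P" "i2 \<in> hom C Y P" and p2: "p2 \<in> hom C P Y"
    and "Cmp C p2 i2 = Idm C Y" "Cmp C p2 i1 = Zer C X Y"
    using bp unfolding is_biproduct_def by auto
  thus "Cmp C (Cmp C v p2) i2 = v" "Cmp C (Cmp C v p2) i1 = Zer C X Z"
    using comp_assoc[OF i(2) p2 v] comp_assoc[OF i(1) p2 v] comp_id_right[OF v]
      comp_zero_right[OF v hom_obs[OF i(1), THEN conjunct1]] by simp_all
qed


lemma biproduct_copair_inj: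
  assumes bp: "is_biproduct C X Y P i1 i2 p1 p2" and u: "u \<in> hom C X Z" and v: "v \<in> hom C Y Z"
  shows "Cmp C (Add C (Cmp C u p1) (Cmp C v p2)) i1 = u"
    "Cmp C (Add C (Cmp C u p1) (Cmp C v p2)) i2 = v"
proof -
  have i: "i1 \<in> hom C X P" "i2 \<in> hom C Y P" and p: "p1 \<in> hom C P X" "p2 \<in> hom C P Y"
    using bp unfolding is_biproduct_def by auto
  show "Cmp C (Add C (Cmp C u p1) (Cmp C v p2)) i1 = u"
    "Cmp C (Add C (Cmp C u p1) (Cmp C v p2)) i2 = v"
    using comp_distrib_right[OF i(1) comp_in_hom[OF p(1) u] comp_in_hom[OF p(2) v]]
      comp_distrib_right[OF i(2) comp_in_hom[OF p(1) u] comp_in_hom[OF p(2) v]]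
      biproduct_proj1_inj[OF bp u] biproduct_proj2_inj[OF bp v] add_zero_right[OF u] add_zero_left[OF v]
    by simp_all
qed
end

locale abelian_cat = preadditive_cat +
  assumes abelian: "is_abelian C"
begin

lemma abelian_kernels: "g \<in> Ar C \<Longrightarrow> \<exists>k. is_kernel C g k"
  using abelian unfolding is_abelian_def by (elim conjE) blast

lemma abelian_cokernels: "g \<in> Ar C \<Longrightarrow> \<exists>q. is_cokernel C g q"
  using abelian unfolding is_abelian_def by (elim conjE) blast

lemma abelian_mono_kernel: "is_mono C m \<Longrightarrow> \<exists>s \<in> Ar C. is_kernel C s m"
  using abelian unfolding is_abelian_def by (elim conjE) blast

lemma abelian_epi_cokernel: "is_epi C e \<Longrightarrow> \<exists>w \<in> Ar C. is_cokernel C w e"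
  using abelian unfolding is_abelian_def by (elim conjE) blast

lemma kernel_exists:
  assumes "g \<in> hom C X Y"
  obtains K k where "k \<in> hom C K X" "is_kernel C g k"
proof -
  obtain k where "is_kernel C g k" using abelian_kernels assms homD by blast
  with assms show thesis using that unfolding is_kernel_def hom_def by auto
qed

lemma cokernel_exists:
  assumes "g \<in> hom C X Y"
  obtains Q q where "q \<in> hom C Y Q" "is_cokernel C g q"
proof -
  obtain q where "is_cokernel C g q" using abelian_cokernels assms homD by blast
  with assms show thesis using that unfolding is_cokernel_def hom_def by auto
qed

lemma mono_is_kernel:
  assumes "is_mono C m" "m \<in> hom C K X"
  obtains S s where "s \<in> hom C X S" "is_kernel C s m"
proof -
  obtain s where "s \<in> Ar C" "is_kernel C s m" using abelian_mono_kernel assms by blast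
  with assms show thesis using that unfolding is_kernel_def hom_def by auto
qed

lemma epi_is_cokernel:
  assumes "is_epi C e" "e \<in> hom C X Y"
  obtains W w where "w \<in> hom C W X" "is_cokernel C w e"
proof -
  obtain w where "w \<in> Ar C" "is_cokernel C w e" using abelian_epi_cokernel assms by blast
  with assms show thesis using that unfolding is_cokernel_def hom_def by auto
qed

lemma kernel_comp_zero:
  "is_kernel C g k \<Longrightarrow> g \<in> hom C X Y \<Longrightarrow> k \<in> hom C K X \<Longrightarrow> Cmp C g k = Zer C K Y"
  unfolding is_kernel_def hom_def by auto

lemma kernel_universal:
  assumes "is_kernel C g k" "g \<in> hom C X Y" "k \<in> hom C K X"
    and "W \<in> Ob C" "h \<in> hom C W X" "Cmp C g h = Zer C W Y"
  shows "\<exists>!u. u \<in> hom C W K \<and> Cmp C k u = h"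
  using assms unfolding is_kernel_def hom_def by auto

lemma kernel_lift:
  assumes "is_kernel C g k" "g \<in> hom C X Y" "k \<in> hom C K X"
    and "h \<in> hom C W X" "Cmp C g h = Zer C W Y"
  obtains u where "u \<in> hom C W K" "Cmp C k u = h"
  using kernel_universal[OF assms(1-3) _ assms(4,5)] hom_obs[OF assms(4)] that by blast

lemma cokernel_comp_zero:
  "is_cokernel C g q \<Longrightarrow> g \<in> hom C X Y \<Longrightarrow> q \<in> hom C Y Q \<Longrightarrow> Cmp C q g = Zer C X Q"
  unfolding is_cokernel_def hom_def by auto

lemma cokernel_desc:
  assumes "is_cokernel C g q" "g \<in> hom C X Y" "q \<in> hom C Y Q"
    and "h \<in> hom C Y W" "Cmp C h g = Zer C X W"
  obtains u where "u \<in> hom C Q W" "Cmp C u q = h"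
proof -
  have "\<exists>!u. u \<in> hom C Q W \<and> Cmp C u q = h"
    using assms hom_obs[OF assms(4)] unfolding is_cokernel_def hom_def by auto
  thus thesis using that by blast
qed

lemma monoD:
  "is_mono C m \<Longrightarrow> m \<in> hom C M Y \<Longrightarrow> u \<in> hom C W M \<Longrightarrow> v \<in> hom C W M \<Longrightarrow>
    Cmp C m u = Cmp C m v \<Longrightarrow> u = v"
  unfolding is_mono_def using hom_obs by (auto simp: hom_def)

lemma kernel_is_mono:
  assumes kg: "is_kernel C g k" and g: "g \<in> hom C X Y" and k: "k \<in> hom C K X"
  shows "is_mono C k"
  unfolding is_mono_def
proof (intro conjI ballI impI)
  show "k \<in> Ar C" using homD[OF k] by blast
  have dom: "Dom C k = K" using homD[OF k] by simp
  fix W u v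
  assume W: "W \<in> Ob C" and "u \<in> hom C W (Dom C k)" "v \<in> hom C W (Dom C k)"
    and eq: "Cmp C k u = Cmp C k v"
  hence u: "u \<in> hom C W K" and v: "v \<in> hom C W K" using dom by auto
  have "Cmp C g (Cmp C k u) = Zer C W Y"
    using comp_assoc[OF u k g] kernel_comp_zero[OF kg g k] comp_zero_left[OF u] hom_obs[OF g] by simp
  from kernel_universal[OF kg g k W comp_in_hom[OF u k] this] show "u = v" using u v eq by auto
qed

lemma mono_comp:
  assumes m: "is_mono C m" "m \<in> hom C M Y" and k: "is_mono C k" "k \<in> hom C K M"
  shows "is_mono C (Cmp C m k)"
  unfolding is_mono_def
proof (intro conjI ballI impI)
  have mk: "Cmp C m k \<in> hom C K Y" using m(2) k(2) by blast
  thus "Cmp C m k \<in> Ar C" using homD by blast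
  fix W u v
  assume "u \<in> hom C W (Dom C (Cmp C m k))" "v \<in> hom C W (Dom C (Cmp C m k))"
    and eq: "Cmp C (Cmp C m k) u = Cmp C (Cmp C m k) v"
  hence u: "u \<in> hom C W K" and v: "v \<in> hom C W K" using homD[OF mk] by auto
  have "Cmp C m (Cmp C k u) = Cmp C m (Cmp C k v)"
    using eq comp_assoc[OF u k(2) m(2)] comp_assoc[OF v k(2) m(2)] by simp
  hence "Cmp C k u = Cmp C k v" using monoD[OF m] u v k(2) by blast
  thus "u = v" using monoD[OF k] u v by blast
qed

text \<open>With m the kernel of the cokernel q of h = m e, the map e is right-cancellable: if
  r e = 0, then e factors through the kernel k of r; the mono m k is the kernel of some s, and
  s h = 0 forces s m = 0, so m factors through m k. Hence k is split epi and r = 0.\<close>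
lemma image_factor_right_cancel:
  assumes h: "h \<in> hom C X Y" and cq: "is_cokernel C h q" and q: "q \<in> hom C Y Q"
    and km: "is_kernel C q m" and m: "m \<in> hom C M Y"
    and e: "e \<in> hom C X M" and me: "Cmp C m e = h"
    and r: "r \<in> hom C M W" and re: "Cmp C r e = Zer C X W"
  shows "r = Zer C M W"
proof -
  have M: "M \<in> Ob C" and W: "W \<in> Ob C" using hom_obs[OF r] by auto
  have m_mono: "is_mono C m" using kernel_is_mono[OF km q m] .
  obtain K k where k: "k \<in> hom C K M" and kr: "is_kernel C r k" using kernel_exists[OF r] .
  obtain e' where e': "e' \<in> hom C X K" and ke': "Cmp C k e' = e"
    using kernel_lift[OF kr r k e re] .
  have mk: "Cmp C m k \<in> hom C K Y" using k m by blast
  obtain S s where s: "s \<in> hom C Y S" and ks: "is_kernel C s (Cmp C m k)"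
    using mono_is_kernel[OF mono_comp[OF m_mono m kernel_is_mono[OF kr r k] k] mk] .
  have S: "S \<in> Ob C" using hom_obs[OF s] by simp
  have "Cmp C s h = Cmp C (Cmp C s (Cmp C m k)) e'"
    using me ke' comp_assoc[OF e' k m] comp_assoc[OF e' mk s] by simp
  hence "Cmp C s h = Zer C X S"
    using kernel_comp_zero[OF ks s mk] comp_zero_left[OF e' S] by simp
  then obtain s' where s': "s' \<in> hom C Q S" and s'q: "Cmp C s' q = s"
    using cokernel_desc[OF cq h q s] by blast
  have "Cmp C s m = Zer C M S"
    using s'q comp_assoc[OF m q s'] kernel_comp_zero[OF km q m] comp_zero_right[OF s' M] by simp
  then obtain j where j: "j \<in> hom C M K" and mkj: "Cmp C (Cmp C m k) j = m"
    using kernel_lift[OF ks s mk m] by blast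
  have "Cmp C m (Cmp C k j) = Cmp C m (Idm C M)"
    using mkj comp_assoc[OF j k m] comp_id_right[OF m] by simp
  hence kj: "Cmp C k j = Idm C M" by (rule monoD[OF m_mono m comp_in_hom[OF j k] id_in_hom[OF M]])
  have "r = Cmp C (Cmp C r k) j" using kj comp_id_right[OF r] comp_assoc[OF j k r] by simp
  thus ?thesis using kernel_comp_zero[OF kr r k] comp_zero_left[OF j W] by simp
qed

lemma image_factor_epi:
  assumes h: "h \<in> hom C X Y" and cq: "is_cokernel C h q" and q: "q \<in> hom C Y Q"
    and km: "is_kernel C q m" and m: "m \<in> hom C M Y"
    and e: "e \<in> hom C X M" and me: "Cmp C m e = h"
  shows "is_epi C e"
  unfolding is_epi_def
proof (intro conjI ballI impI)
  show "e \<in> Ar C" using homD[OF e] by blast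
  fix W u v
  assume "u \<in> hom C (Cod C e) W" "v \<in> hom C (Cod C e) W" and eq: "Cmp C u e = Cmp C v e"
  hence u: "u \<in> hom C M W" and v: "v \<in> hom C M W" using homD[OF e] by auto
  have "Cmp C (Add C u (Neg C v)) e = Zer C X W"
    using comp_distrib_right[OF e u neg_in_hom[OF v]] comp_neg_left[OF e v] eq
      add_neg_right[OF comp_in_hom[OF e v]] by simp
  hence "Add C u (Neg C v) = Zer C M W"
    using image_factor_right_cancel[OF h cq q km m e me] u v by blast
  thus "u = v" using diff_eq_zero_iff_eq[OF u v] by simp
qed

text \<open>Factor h through its image as an epi followed by a mono: the epi is the cokernel of its
  kernel, which maps into the kernel of h, and injectivity extends along the mono.\<close>
lemma extend_along_kernel:
  assumes h: "h \<in> hom C X Y" and kh: "is_kernel C h \<kappa>" and \<kappa>: "\<kappa> \<in> hom C K X"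
    and \<Phi>: "\<Phi> \<in> hom C X J" and \<Phi>\<kappa>: "Cmp C \<Phi> \<kappa> = Zer C K J"
    and inj: "injective_obj C J"
  obtains \<psi> where "\<psi> \<in> hom C Y J" "Cmp C \<psi> h = \<Phi>"
proof -
  have J: "J \<in> Ob C" using hom_obs[OF \<Phi>] by simp
  obtain Q q where q: "q \<in> hom C Y Q" and cq: "is_cokernel C h q" using cokernel_exists[OF h] .
  obtain M m where m: "m \<in> hom C M Y" and km: "is_kernel C q m" using kernel_exists[OF q] .
  have M: "M \<in> Ob C" using hom_obs[OF m] by simp
  obtain e where e: "e \<in> hom C X M" and me: "Cmp C m e = h"
    using kernel_lift[OF km q m h cokernel_comp_zero[OF cq h q]] .
  obtain V w where w: "w \<in> hom C V X" and cw: "is_cokernel C w e"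
    using epi_is_cokernel[OF image_factor_epi[OF h cq q km m e me] e] .
  have V: "V \<in> Ob C" using hom_obs[OF w] by simp
  have "Cmp C h w = Cmp C m (Cmp C e w)" using me comp_assoc[OF w e m] by simp
  hence "Cmp C h w = Zer C V Y"
    using cokernel_comp_zero[OF cw w e] comp_zero_right[OF m V] by simp
  then obtain w' where w': "w' \<in> hom C V K" and \<kappa>w': "Cmp C \<kappa> w' = w"
    using kernel_lift[OF kh h \<kappa> w] by blast
  have "Cmp C \<Phi> w = Zer C V J"
    using \<kappa>w' comp_assoc[OF w' \<kappa> \<Phi>] \<Phi>\<kappa> comp_zero_left[OF w' J] by simp
  then obtain \<Psi> where \<Psi>: "\<Psi> \<in> hom C M J" and \<Psi>e: "Cmp C \<Psi> e = \<Phi>"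
    using cokernel_desc[OF cw w e \<Phi>] by blast
  obtain \<psi> where \<psi>: "\<psi> \<in> hom C Y J" and \<psi>m: "Cmp C \<psi> m = \<Psi>"
    using inj M hom_obs[OF m] m \<Psi> kernel_is_mono[OF km q m] unfolding injective_obj_def by blast
  have "Cmp C \<psi> h = \<Phi>" using me \<psi>m \<Psi>e comp_assoc[OF e m \<psi>] by simp
  with \<psi> show thesis by (rule that)
qed

lemma zero_obj_exists: obtains Z where "zero_obj C Z"
proof -
  have "\<exists>Z \<in> Ob C. \<forall>X \<in> Ob C. hom C Z X = {Zer C Z X} \<and> hom C X Z = {Zer C X Z}"
    using abelian unfolding is_abelian_def by (elim conjE)
  thus thesis using that unfolding zero_obj_def by blast
qed

lemma biproduct_exists:
  assumes "X \<in> Ob C" "Y \<in> Ob C"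
  obtains P i1 i2 p1 p2 where "is_biproduct C X Y P i1 i2 p1 p2"
proof -
  have "\<forall>X \<in> Ob C. \<forall>Y \<in> Ob C. \<exists>P \<in> Ob C. \<exists>i1 i2 p1 p2.
      i1 \<in> hom C X P \<and> i2 \<in> hom C Y P \<and> p1 \<in> hom C P X \<and> p2 \<in> hom C P Y \<and>
      Cmp C p1 i1 = Idm C X \<and> Cmp C p2 i2 = Idm C Y \<and>
      Cmp C p1 i2 = Zer C Y X \<and> Cmp C p2 i1 = Zer C X Y \<and>
      Add C (Cmp C i1 p1) (Cmp C i2 p2) = Idm C P"
    using abelian unfolding is_abelian_def by (elim conjE)
  thus thesis using assms that unfolding is_biproduct_def by blast
qed


lemma cxA_zero_zero:
  assumes Z: "zero_obj C Z" and W: "W \<in> Ob C"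
  shows "cxA C (Z, Z, W, Zer C Z Z, Zer C Z W)"
proof -
  have Zob: "Z \<in> Ob C" and to_Z: "\<And>X. X \<in> Ob C \<Longrightarrow> hom C X Z = {Zer C X Z}"
    using Z unfolding zero_obj_def by auto
  have zZ: "Zer C Z Z \<in> hom C Z Z" and zW: "Zer C Z W \<in> hom C Z W" using Zob W by auto
  have zzW: "Cmp C (Zer C Z W) (Zer C Z Z) = Zer C Z W"
    using zero_obj_hom_from_unique[OF Z comp_in_hom[OF zZ zW] zW] .
  have dom: "Dom C (Zer C Z Z) = Z" "Dom C (Zer C Z W) = Z" "Cod C (Zer C Z W) = W"
    using homD[OF zZ] homD[OF zW] by auto
  have "is_mono C (Zer C Z Z)"
    unfolding is_mono_def using zZ to_Z by (auto simp: hom_def)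
  moreover have "is_kernel C (Zer C Z W) (Zer C Z Z)"
    unfolding is_kernel_def
  proof (intro conjI ballI impI)
    fix V h assume V: "V \<in> Ob C" and "h \<in> hom C V (Dom C (Zer C Z W))"
    hence "h = Zer C V Z" using to_Z dom by auto
    moreover have "Cmp C (Zer C Z Z) (Zer C V Z) = Zer C V Z"
      using comp_zero_right[OF zZ V] .
    ultimately show "\<exists>!u. u \<in> hom C V (Dom C (Zer C Z Z)) \<and> Cmp C (Zer C Z Z) u = h"
      using to_Z[OF V] dom by auto
  qed (use zZ zW zzW dom homD in auto)
  ultimately show ?thesis
    unfolding cxA_def using Zob W zZ zW zzW by simp
qed

lemma chain_map_from_zero_zero:
  assumes Z: "zero_obj C Z" and W: "W \<in> Ob C" and X: "cxA C (A, B, Cc, f, g)"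
    and x: "x \<in> hom C W Cc"
  shows "chain_map C (Z, Z, W, Zer C Z Z, Zer C Z W) (A, B, Cc, f, g) (Zer C Z A, Zer C Z B, x)"
proof -
  have f: "f \<in> hom C A B" and g: "g \<in> hom C B Cc" using X unfolding cxA_def by auto
  have Zob: "Z \<in> Ob C" using Z unfolding zero_obj_def by simp
  have zA: "Zer C Z A \<in> hom C Z A" and zB: "Zer C Z B \<in> hom C Z B"
    using Zob hom_obs[OF f] by auto
  have zZ: "Zer C Z Z \<in> hom C Z Z" and zW: "Zer C Z W \<in> hom C Z W" using Zob W by auto
  show ?thesis
    unfolding chain_map_def
    using zA zB x zero_obj_hom_from_unique[OF Z comp_in_hom[OF zZ zB] comp_in_hom[OF zA f]]
      zero_obj_hom_from_unique[OF Z comp_in_hom[OF zW x] comp_in_hom[OF zB g]] by simp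
qed

lemma homotopic_from_zero_zero_iff:
  assumes Z: "zero_obj C Z" and W: "W \<in> Ob C" and X: "cxA C (A, B, Cc, f, g)"
    and x: "x \<in> hom C W Cc" and x': "x' \<in> hom C W Cc"
  shows "homotopic C (Z, Z, W, Zer C Z Z, Zer C Z W) (A, B, Cc, f, g)
      (Zer C Z A, Zer C Z B, x) (Zer C Z A, Zer C Z B, x')
    \<longleftrightarrow> (\<exists>t \<in> hom C W B. Add C x (Neg C x') = Cmp C g t)"
proof -
  have f: "f \<in> hom C A B" and g: "g \<in> hom C B Cc" using X unfolding cxA_def by auto
  have Zob: "Z \<in> Ob C" using Z unfolding zero_obj_def by simp
  have zA: "Zer C Z A \<in> hom C Z A" and zB: "Zer C Z B \<in> hom C Z B"
    using Zob hom_obs[OF f] by auto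
  have zZ: "Zer C Z Z \<in> hom C Z Z" and zW: "Zer C Z W \<in> hom C Z W" using Zob W by auto
  have low_degrees: "Add C (Zer C Z A) (Neg C (Zer C Z A)) = Cmp C s (Zer C Z Z) \<and>
      Add C (Zer C Z B) (Neg C (Zer C Z B)) = Add C (Cmp C f s) (Cmp C t (Zer C Z W))"
    if s: "s \<in> hom C Z A" and t: "t \<in> hom C W B" for s t
    using zero_obj_hom_from_unique[OF Z add_in_hom[OF zA neg_in_hom[OF zA]] comp_in_hom[OF zZ s]]
      zero_obj_hom_from_unique[OF Z add_in_hom[OF zB neg_in_hom[OF zB]]
        add_in_hom[OF comp_in_hom[OF s f] comp_in_hom[OF zW t]]] by simp
  show ?thesis
    unfolding homotopic_def
    using chain_map_from_zero_zero[OF Z W X x] chain_map_from_zero_zero[OF Z W X x']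
      low_degrees zA by auto
qed

text \<open>Compare the maps (0, 0, x) and 0 out of [0 \<rightarrow> 0 \<rightarrow> W]: after composing with u they
  become homotopic via y, so they were homotopic already, and the homotopy exhibits x as g1 z.\<close>
lemma mono_A_reflects_boundaries:
  assumes mono: "mono_A C (A, B, Cc, f1, g1) (A', B', C', f2, g2) (a, b, c)"
    and X: "cxA C (A, B, Cc, f1, g1)" and Y: "cxA C (A', B', C', f2, g2)"
    and x: "x \<in> hom C W Cc" and y: "y \<in> hom C W B'" and cx: "Cmp C c x = Cmp C g2 y"
  obtains z where "z \<in> hom C W B" "x = Cmp C g1 z"
proof -
  obtain Z where Z: "zero_obj C Z" by (rule zero_obj_exists)
  have W: "W \<in> Ob C" using hom_obs[OF x] by simp
  have a: "a \<in> hom C A A'" and b: "b \<in> hom C B B'" and c: "c \<in> hom C Cc C'"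
    using mono unfolding mono_A_def chain_map_def by auto
  have Zob: "Z \<in> Ob C" using Z unfolding zero_obj_def by simp
  let ?Z = "(Z, Z, W, Zer C Z Z, Zer C Z W)"
  let ?v = "(Zer C Z A, Zer C Z B, x)" and ?w = "(Zer C Z A, Zer C Z B, Zer C W Cc)"
  have 0: "Zer C W Cc \<in> hom C W Cc" using W hom_obs[OF c] by blast
  have uv: "cmp3 C (a, b, c) ?v = (Zer C Z A', Zer C Z B', Cmp C c x)"
    and uw: "cmp3 C (a, b, c) ?w = (Zer C Z A', Zer C Z B', Zer C W C')"
    unfolding cmp3_def using comp_zero_right[OF a Zob] comp_zero_right[OF b Zob]
      comp_zero_right[OF c W] by simp_all
  have "Add C (Cmp C c x) (Neg C (Zer C W C')) = Cmp C g2 y"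
    using cx neg_zero[OF W] add_zero_right[OF comp_in_hom[OF x c]] hom_obs[OF c] by simp
  hence "homotopic C ?Z (A', B', C', f2, g2) (cmp3 C (a, b, c) ?v) (cmp3 C (a, b, c) ?w)"
    unfolding uv uw
    using homotopic_from_zero_zero_iff[OF Z W Y comp_in_hom[OF x c]] y hom_obs[OF c] W by auto
  hence "homotopic C ?Z (A, B, Cc, f1, g1) ?v ?w"
    using mono cxA_zero_zero[OF Z W] chain_map_from_zero_zero[OF Z W X x]
      chain_map_from_zero_zero[OF Z W X 0] unfolding mono_A_def by blast
  then obtain z where "z \<in> hom C W B" "Add C x (Neg C (Zer C W Cc)) = Cmp C g1 z"
    using homotopic_from_zero_zero_iff[OF Z W X x 0] by blast
  thus thesis using that neg_zero[OF W] add_zero_right[OF x] hom_obs[OF x] by simp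
qed


text \<open>The kernel of (c, g2) : Cc \<oplus> B' \<rightarrow> C' is, up to sign, the pullback of c along g2;
  its first leg consists of boundaries because u is a monomorphism.\<close>
lemma pullback_leg_boundary:
  assumes mono: "mono_A C (A, B, Cc, f1, g1) (A', B', C', f2, g2) (a, b, c)"
    and X: "cxA C (A, B, Cc, f1, g1)" and Y: "cxA C (A', B', C', f2, g2)"
    and bp: "is_biproduct C Cc B' P i1 i2 q1 q2"
    and k\<kappa>: "is_kernel C (Add C (Cmp C c q1) (Cmp C g2 q2)) \<kappa>" and \<kappa>: "\<kappa> \<in> hom C K P"
  obtains z where "z \<in> hom C K B" "Cmp C q1 \<kappa> = Cmp C g1 z"
proof -
  have c: "c \<in> hom C Cc C'" using mono unfolding mono_A_def chain_map_def by auto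
  have g2: "g2 \<in> hom C B' C'" using Y unfolding cxA_def by auto
  have q1: "q1 \<in> hom C P Cc" and q2: "q2 \<in> hom C P B'" using bp unfolding is_biproduct_def by auto
  have x: "Cmp C q1 \<kappa> \<in> hom C K Cc" and y: "Cmp C q2 \<kappa> \<in> hom C K B'" using \<kappa> q1 q2 by auto
  have "Add C (Cmp C g2 (Cmp C q2 \<kappa>)) (Cmp C c (Cmp C q1 \<kappa>)) = Zer C K C'"
    using kernel_comp_zero[OF k\<kappa> add_in_hom[OF comp_in_hom[OF q1 c] comp_in_hom[OF q2 g2]] \<kappa>]
      comp_distrib_right[OF \<kappa> comp_in_hom[OF q1 c] comp_in_hom[OF q2 g2]]
      comp_assoc[OF \<kappa> q1 c] comp_assoc[OF \<kappa> q2 g2] add_comm[OF comp_in_hom[OF x c] comp_in_hom[OF y g2]]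
    by simp
  hence "Cmp C c (Cmp C q1 \<kappa>) = Cmp C g2 (Neg C (Cmp C q2 \<kappa>))"
    using neg_unique[OF comp_in_hom[OF y g2] comp_in_hom[OF x c]] comp_neg_right[OF y g2] by simp
  with mono_A_reflects_boundaries[OF mono X Y x neg_in_hom[OF y]] that show thesis by blast
qed

text \<open>Let \<kappa> : K \<rightarrow> P be the kernel of h = (c, g2) on P = Cc \<oplus> B', with first leg g1 z.
  Injectivity of I extends -\<phi>1 z along \<kappa> to \<chi> : P \<rightarrow> I, and then \<Phi> = \<phi>2 q1 + e \<chi>
  vanishes on \<kappa>, so injectivity of J extends \<Phi> along h to \<psi>2. The components of \<chi> are \<psi>1
  and the homotopy t.\<close>
lemma lift_top_degrees:
  assumes E: "cxA C (D, I, J, d, e)" and injI: "injective_obj C I" and injJ: "injective_obj C J"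
    and X: "cxA C (A, B, Cc, f1, g1)" and Y: "cxA C (A', B', C', f2, g2)"
    and mono: "mono_A C (A, B, Cc, f1, g1) (A', B', C', f2, g2) (a, b, c)"
    and \<phi>: "chain_map C (A, B, Cc, f1, g1) (D, I, J, d, e) (\<phi>0, \<phi>1, \<phi>2)"
  obtains \<psi>1 \<psi>2 t where "\<psi>1 \<in> hom C B' I" "\<psi>2 \<in> hom C C' J" "t \<in> hom C Cc I"
    "Cmp C \<psi>2 g2 = Cmp C e \<psi>1" "Cmp C \<psi>2 c = Add C \<phi>2 (Cmp C e t)"
proof -
  have c: "c \<in> hom C Cc C'" using mono unfolding mono_A_def chain_map_def by auto
  have g1: "g1 \<in> hom C B Cc" and g2: "g2 \<in> hom C B' C'" using X Y unfolding cxA_def by auto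
  have e: "e \<in> hom C I J" using E unfolding cxA_def by auto
  have \<phi>1: "\<phi>1 \<in> hom C B I" and \<phi>2: "\<phi>2 \<in> hom C Cc J" and \<phi>g: "Cmp C \<phi>2 g1 = Cmp C e \<phi>1"
    using \<phi> unfolding chain_map_def by auto
  obtain P i1 i2 q1 q2 where bp: "is_biproduct C Cc B' P i1 i2 q1 q2"
    using biproduct_exists hom_obs[OF c] hom_obs[OF g2] by metis
  have P: "P \<in> Ob C" and i1: "i1 \<in> hom C Cc P" and i2: "i2 \<in> hom C B' P"
    and q1: "q1 \<in> hom C P Cc" and q2: "q2 \<in> hom C P B'"
    using bp unfolding is_biproduct_def by auto
  define h where "h = Add C (Cmp C c q1) (Cmp C g2 q2)"
  have h: "h \<in> hom C P C'" unfolding h_def using c q1 g2 q2 by blast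
  obtain K \<kappa> where \<kappa>: "\<kappa> \<in> hom C K P" and k\<kappa>: "is_kernel C h \<kappa>" using kernel_exists[OF h] .
  obtain z where z: "z \<in> hom C K B" and q1\<kappa>: "Cmp C q1 \<kappa> = Cmp C g1 z"
    using pullback_leg_boundary[OF mono X Y bp k\<kappa>[unfolded h_def] \<kappa>] .
  obtain \<chi> where \<chi>: "\<chi> \<in> hom C P I" and \<chi>\<kappa>: "Cmp C \<chi> \<kappa> = Neg C (Cmp C \<phi>1 z)"
    using injI hom_obs[OF \<kappa>] \<kappa> neg_in_hom[OF comp_in_hom[OF z \<phi>1]] kernel_is_mono[OF k\<kappa> h \<kappa>]
    unfolding injective_obj_def by metis
  define \<Phi> where "\<Phi> = Add C (Cmp C \<phi>2 q1) (Cmp C e \<chi>)"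
  have \<Phi>: "\<Phi> \<in> hom C P J" unfolding \<Phi>_def using \<phi>2 q1 e \<chi> by blast
  have "Cmp C \<Phi> \<kappa> = Add C (Cmp C e (Cmp C \<phi>1 z)) (Neg C (Cmp C e (Cmp C \<phi>1 z)))"
    unfolding \<Phi>_def
    using comp_distrib_right[OF \<kappa> comp_in_hom[OF q1 \<phi>2] comp_in_hom[OF \<chi> e]]
      comp_assoc[OF \<kappa> q1 \<phi>2] comp_assoc[OF \<kappa> \<chi> e] \<chi>\<kappa> q1\<kappa> comp_assoc[OF z g1 \<phi>2] \<phi>g
      comp_assoc[OF z \<phi>1 e] comp_neg_right[OF comp_in_hom[OF z \<phi>1] e] by simp
  hence "Cmp C \<Phi> \<kappa> = Zer C K J" using add_neg_right[OF comp_in_hom[OF comp_in_hom[OF z \<phi>1] e]] by simp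
  then obtain \<psi>2 where \<psi>2: "\<psi>2 \<in> hom C C' J" and \<psi>2h: "Cmp C \<psi>2 h = \<Phi>"
    using extend_along_kernel[OF h k\<kappa> \<kappa> \<Phi> _ injJ] by blast
  have hi1: "Cmp C h i1 = c" and hi2: "Cmp C h i2 = g2"
    unfolding h_def using biproduct_copair_inj[OF bp c g2] by simp_all
  have \<Phi>i1: "Cmp C \<Phi> i1 = Add C \<phi>2 (Cmp C e (Cmp C \<chi> i1))"
    and \<Phi>i2: "Cmp C \<Phi> i2 = Cmp C e (Cmp C \<chi> i2)"
    unfolding \<Phi>_def
    using comp_distrib_right[OF i1 comp_in_hom[OF q1 \<phi>2] comp_in_hom[OF \<chi> e]]
      comp_distrib_right[OF i2 comp_in_hom[OF q1 \<phi>2] comp_in_hom[OF \<chi> e]]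
      comp_assoc[OF i1 \<chi> e] comp_assoc[OF i2 \<chi> e] biproduct_proj1_inj[OF bp \<phi>2]
      add_zero_left[OF comp_in_hom[OF comp_in_hom[OF i2 \<chi>] e]] by simp_all
  show thesis
  proof (rule that)
    show "Cmp C \<chi> i2 \<in> hom C B' I" "Cmp C \<chi> i1 \<in> hom C Cc I" using \<chi> i1 i2 by auto
    show "Cmp C \<psi>2 g2 = Cmp C e (Cmp C \<chi> i2)"
      using hi2 \<psi>2h \<Phi>i2 comp_assoc[OF i2 h \<psi>2] by simp
    show "Cmp C \<psi>2 c = Add C \<phi>2 (Cmp C e (Cmp C \<chi> i1))"
      using hi1 \<psi>2h \<Phi>i1 comp_assoc[OF i1 h \<psi>2] by simp
  qed (fact \<psi>2)
qed


lemma homotopy_middle_degree: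
  assumes E: "cxA C (D, I, J, d, e)"
    and X: "cxA C (A, B, Cc, f1, g1)" and Y: "cxA C (A', B', C', f2, g2)"
    and u: "chain_map C (A, B, Cc, f1, g1) (A', B', C', f2, g2) (a, b, c)"
    and \<phi>: "chain_map C (A, B, Cc, f1, g1) (D, I, J, d, e) (\<phi>0, \<phi>1, \<phi>2)"
    and \<psi>1: "\<psi>1 \<in> hom C B' I" and \<psi>2: "\<psi>2 \<in> hom C C' J" and t: "t \<in> hom C Cc I"
    and \<psi>2g2: "Cmp C \<psi>2 g2 = Cmp C e \<psi>1" and \<psi>2c: "Cmp C \<psi>2 c = Add C \<phi>2 (Cmp C e t)"
  obtains s where "s \<in> hom C B D"
    "Add C (Cmp C \<psi>1 b) (Neg C \<phi>1) = Add C (Cmp C d s) (Cmp C t g1)"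
proof -
  have b: "b \<in> hom C B B'" and c: "c \<in> hom C Cc C'" and cg: "Cmp C c g1 = Cmp C g2 b"
    using u unfolding chain_map_def by auto
  have g1: "g1 \<in> hom C B Cc" using X unfolding cxA_def by auto
  have g2: "g2 \<in> hom C B' C'" using Y unfolding cxA_def by auto
  have d: "d \<in> hom C D I" and e: "e \<in> hom C I J" and ed: "is_kernel C e d"
    using E unfolding cxA_def by auto
  have \<phi>1: "\<phi>1 \<in> hom C B I" and \<phi>2: "\<phi>2 \<in> hom C Cc J" and \<phi>g: "Cmp C \<phi>2 g1 = Cmp C e \<phi>1"
    using \<phi> unfolding chain_map_def by auto
  have tg1: "Cmp C t g1 \<in> hom C B I" and \<psi>1b: "Cmp C \<psi>1 b \<in> hom C B I" using t g1 \<psi>1 b by auto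
  have \<psi>1b_\<phi>1: "Add C (Cmp C \<psi>1 b) (Neg C \<phi>1) \<in> hom C B I" using \<psi>1b \<phi>1 by blast
  define \<rho> where "\<rho> = Add C (Add C (Cmp C \<psi>1 b) (Neg C \<phi>1)) (Neg C (Cmp C t g1))"
  have \<rho>: "\<rho> \<in> hom C B I" unfolding \<rho>_def using \<psi>1b_\<phi>1 tg1 by blast
  have "Cmp C e (Cmp C \<psi>1 b) = Add C (Cmp C \<phi>2 g1) (Cmp C e (Cmp C t g1))"
    using comp_assoc[OF b \<psi>1 e] \<psi>2g2 comp_assoc[OF b g2 \<psi>2] cg comp_assoc[OF g1 c \<psi>2] \<psi>2c
      comp_distrib_right[OF g1 \<phi>2 comp_in_hom[OF t e]] comp_assoc[OF g1 t e] by simp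
  hence "Cmp C e \<rho> = Add C (Add C (Add C (Cmp C \<phi>2 g1) (Cmp C e (Cmp C t g1)))
      (Neg C (Cmp C \<phi>2 g1))) (Neg C (Cmp C e (Cmp C t g1)))"
    unfolding \<rho>_def
    using comp_distrib_left[OF \<psi>1b_\<phi>1 neg_in_hom[OF tg1] e]
      comp_distrib_left[OF \<psi>1b neg_in_hom[OF \<phi>1] e] comp_neg_right[OF \<phi>1 e]
      comp_neg_right[OF tg1 e] \<phi>g by simp
  hence "Cmp C e \<rho> = Zer C B J"
    using add_diff_diff_cancel[OF comp_in_hom[OF g1 \<phi>2] comp_in_hom[OF tg1 e]] by simp
  then obtain s where s: "s \<in> hom C B D" and ds: "Cmp C d s = \<rho>"
    using kernel_lift[OF ed e d \<rho>] by blast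
  have "Add C (Cmp C \<psi>1 b) (Neg C \<phi>1) = Add C (Cmp C d s) (Cmp C t g1)"
    using diff_eq_iff_eq_add[OF \<psi>1b_\<phi>1 tg1 \<rho>] ds \<rho>_def by simp
  with s show thesis by (rule that)
qed

lemma homotopy_bottom_degree:
  assumes E: "cxA C (D, I, J, d, e)"
    and X: "cxA C (A, B, Cc, f1, g1)" and Y: "cxA C (A', B', C', f2, g2)"
    and u: "chain_map C (A, B, Cc, f1, g1) (A', B', C', f2, g2) (a, b, c)"
    and \<phi>: "chain_map C (A, B, Cc, f1, g1) (D, I, J, d, e) (\<phi>0, \<phi>1, \<phi>2)"
    and \<psi>0: "\<psi>0 \<in> hom C A' D" and \<psi>1: "\<psi>1 \<in> hom C B' I"
    and d\<psi>0: "Cmp C d \<psi>0 = Cmp C \<psi>1 f2"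
    and s: "s \<in> hom C B D" and t: "t \<in> hom C Cc I"
    and H1: "Add C (Cmp C \<psi>1 b) (Neg C \<phi>1) = Add C (Cmp C d s) (Cmp C t g1)"
  shows "Add C (Cmp C \<psi>0 a) (Neg C \<phi>0) = Cmp C s f1"
proof (rule monoD)
  have a: "a \<in> hom C A A'" and b: "b \<in> hom C B B'" and bf: "Cmp C b f1 = Cmp C f2 a"
    using u unfolding chain_map_def by auto
  have f1: "f1 \<in> hom C A B" and g1: "g1 \<in> hom C B Cc" and g1f1: "Cmp C g1 f1 = Zer C A Cc"
    using X unfolding cxA_def by auto
  have f2: "f2 \<in> hom C A' B'" using Y unfolding cxA_def by auto
  show d: "d \<in> hom C D I" and "is_mono C d" using E unfolding cxA_def by auto
  have \<phi>0: "\<phi>0 \<in> hom C A D" and \<phi>1: "\<phi>1 \<in> hom C B I" and \<phi>f: "Cmp C \<phi>1 f1 = Cmp C d \<phi>0"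
    using \<phi> unfolding chain_map_def by auto
  have A: "A \<in> Ob C" using hom_obs[OF a] by simp
  show "Add C (Cmp C \<psi>0 a) (Neg C \<phi>0) \<in> hom C A D" "Cmp C s f1 \<in> hom C A D"
    using \<psi>0 a \<phi>0 s f1 by auto
  have "Cmp C d (Add C (Cmp C \<psi>0 a) (Neg C \<phi>0)) = Add C (Cmp C (Cmp C \<psi>1 b) f1) (Neg C (Cmp C \<phi>1 f1))"
    using comp_distrib_left[OF comp_in_hom[OF a \<psi>0] neg_in_hom[OF \<phi>0] d] comp_neg_right[OF \<phi>0 d]
      \<phi>f comp_assoc[OF a \<psi>0 d] d\<psi>0 comp_assoc[OF a f2 \<psi>1] bf comp_assoc[OF f1 b \<psi>1] by simp
  also have "\<dots> = Cmp C (Add C (Cmp C \<psi>1 b) (Neg C \<phi>1)) f1"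
    using comp_distrib_right[OF f1 comp_in_hom[OF b \<psi>1] neg_in_hom[OF \<phi>1]] comp_neg_left[OF f1 \<phi>1]
    by simp
  also have "\<dots> = Cmp C d (Cmp C s f1)"
    using H1 comp_distrib_right[OF f1 comp_in_hom[OF s d] comp_in_hom[OF g1 t]]
      comp_assoc[OF f1 s d] comp_assoc[OF f1 g1 t] g1f1 comp_zero_right[OF t A]
      add_zero_right[OF comp_in_hom[OF comp_in_hom[OF f1 s] d]] by simp
  finally show "Cmp C d (Add C (Cmp C \<psi>0 a) (Neg C \<phi>0)) = Cmp C d (Cmp C s f1)" .
qed

lemma homotopy_from_top_degrees:
  assumes E: "cxA C (D, I, J, d, e)"
    and X: "cxA C (A, B, Cc, f1, g1)" and Y: "cxA C (A', B', C', f2, g2)"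
    and u: "chain_map C (A, B, Cc, f1, g1) (A', B', C', f2, g2) (a, b, c)"
    and \<phi>: "chain_map C (A, B, Cc, f1, g1) (D, I, J, d, e) (\<phi>0, \<phi>1, \<phi>2)"
    and \<psi>1: "\<psi>1 \<in> hom C B' I" and \<psi>2: "\<psi>2 \<in> hom C C' J" and t: "t \<in> hom C Cc I"
    and \<psi>2g2: "Cmp C \<psi>2 g2 = Cmp C e \<psi>1" and \<psi>2c: "Cmp C \<psi>2 c = Add C \<phi>2 (Cmp C e t)"
  shows "\<exists>\<psi>. chain_map C (A', B', C', f2, g2) (D, I, J, d, e) \<psi> \<and>
    homotopic C (A, B, Cc, f1, g1) (D, I, J, d, e) (cmp3 C \<psi> (a, b, c)) (\<phi>0, \<phi>1, \<phi>2)"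
proof -
  have a: "a \<in> hom C A A'" and b: "b \<in> hom C B B'" and c: "c \<in> hom C Cc C'"
    and bf: "Cmp C b f1 = Cmp C f2 a" and cg: "Cmp C c g1 = Cmp C g2 b"
    using u unfolding chain_map_def by auto
  have f1: "f1 \<in> hom C A B" and g1: "g1 \<in> hom C B Cc" using X unfolding cxA_def by auto
  have f2: "f2 \<in> hom C A' B'" and g2: "g2 \<in> hom C B' C'" and g2f2: "Cmp C g2 f2 = Zer C A' C'"
    using Y unfolding cxA_def by auto
  have d: "d \<in> hom C D I" and e: "e \<in> hom C I J" and ed: "is_kernel C e d"
    using E unfolding cxA_def by auto
  have \<phi>2: "\<phi>2 \<in> hom C Cc J" using \<phi> unfolding chain_map_def by auto
  have "Cmp C e (Cmp C \<psi>1 f2) = Zer C A' J"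
    using comp_assoc[OF f2 \<psi>1 e] \<psi>2g2 comp_assoc[OF f2 g2 \<psi>2] g2f2
      comp_zero_right[OF \<psi>2 hom_obs[OF f2, THEN conjunct1]] by simp
  then obtain \<psi>0 where \<psi>0: "\<psi>0 \<in> hom C A' D" and d\<psi>0: "Cmp C d \<psi>0 = Cmp C \<psi>1 f2"
    using kernel_lift[OF ed e d comp_in_hom[OF f2 \<psi>1]] by blast
  obtain s where s: "s \<in> hom C B D"
    and H1: "Add C (Cmp C \<psi>1 b) (Neg C \<phi>1) = Add C (Cmp C d s) (Cmp C t g1)"
    using homotopy_middle_degree[OF E X Y u \<phi> \<psi>1 \<psi>2 t \<psi>2g2 \<psi>2c] .
  have H0: "Add C (Cmp C \<psi>0 a) (Neg C \<phi>0) = Cmp C s f1"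
    using homotopy_bottom_degree[OF E X Y u \<phi> \<psi>0 \<psi>1 d\<psi>0 s t H1] .
  have H2: "Add C (Cmp C \<psi>2 c) (Neg C \<phi>2) = Cmp C e t"
    using diff_eq_iff_eq_add[OF comp_in_hom[OF c \<psi>2] \<phi>2 comp_in_hom[OF t e]] \<psi>2c
      add_comm[OF \<phi>2 comp_in_hom[OF t e]] by simp
  have "chain_map C (A', B', C', f2, g2) (D, I, J, d, e) (\<psi>0, \<psi>1, \<psi>2)"
    unfolding chain_map_def using \<psi>0 \<psi>1 \<psi>2 d\<psi>0 \<psi>2g2 by simp
  moreover have "chain_map C (A, B, Cc, f1, g1) (D, I, J, d, e) (cmp3 C (\<psi>0, \<psi>1, \<psi>2) (a, b, c))"
    unfolding chain_map_def cmp3_def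
    using \<psi>0 \<psi>1 \<psi>2 a b c comp_assoc[OF f1 b \<psi>1] bf comp_assoc[OF a f2 \<psi>1] d\<psi>0 comp_assoc[OF a \<psi>0 d]
      comp_assoc[OF g1 c \<psi>2] cg comp_assoc[OF b g2 \<psi>2] \<psi>2g2 comp_assoc[OF b \<psi>1 e] by auto
  moreover have "homotopic C (A, B, Cc, f1, g1) (D, I, J, d, e)
      (cmp3 C (\<psi>0, \<psi>1, \<psi>2) (a, b, c)) (\<phi>0, \<phi>1, \<phi>2)"
    unfolding homotopic_def using calculation(2) \<phi> H0 H1 H2 s t by (simp add: cmp3_def) blast
  ultimately show ?thesis by blast
qed

end

theorem proposition3p2:
  fixes C :: "('o, 'm) addcat"
    and D I J :: 'o and f g :: 'm
  assumes "is_abelian C"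
    and "cxA C (D, I, J, f, g)"
    and "injective_obj C I"
    and "injective_obj C J"
  shows "injective_A C (D, I, J, f, g)"
  unfolding injective_A_def
proof (intro conjI allI impI)
  interpret abelian_cat C
    using assms(1) by unfold_locales (simp_all add: is_abelian_def)
  fix X Y u \<phi>
  assume X: "cxA C X" and Y: "cxA C Y" and mono: "mono_A C X Y u"
    and \<phi>: "chain_map C X (D, I, J, f, g) \<phi>"
  obtain A B Cc f1 g1 where [simp]: "X = (A, B, Cc, f1, g1)" by (cases X)
  obtain A' B' C' f2 g2 where [simp]: "Y = (A', B', C', f2, g2)" by (cases Y)
  obtain a b c where [simp]: "u = (a, b, c)" by (cases u)
  obtain \<phi>0 \<phi>1 \<phi>2 where [simp]: "\<phi> = (\<phi>0, \<phi>1, \<phi>2)" by (cases \<phi>)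
  obtain \<psi>1 \<psi>2 t where "\<psi>1 \<in> hom C B' I" "\<psi>2 \<in> hom C C' J" "t \<in> hom C Cc I"
    "Cmp C \<psi>2 g2 = Cmp C g \<psi>1" "Cmp C \<psi>2 c = Add C \<phi>2 (Cmp C g t)"
    using lift_top_degrees[OF assms(2-4) X[simplified] Y[simplified] mono[simplified] \<phi>[simplified]] .
  then show "\<exists>\<psi>. chain_map C Y (D, I, J, f, g) \<psi> \<and> homotopic C X (D, I, J, f, g) (cmp3 C \<psi> u) \<phi>"
    using homotopy_from_top_degrees[OF assms(2) X[simplified] Y[simplified]
      mono[simplified, unfolded mono_A_def, THEN conjunct1] \<phi>[simplified]] by simp
qed (fact assms(2))

end
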